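(* Let $n=2$ and let $M$ be a Griffiths positive $2\times 2$ matrix of constant coefficient $(1,1)$-forms on $\mathbb{C}^2$. Then $\Omega=\det(M)$ is a Lefschetz form for the bidegree $(0,0)$, i.e. $c\mapsto c\,\Omega$ is an isomorphism $\mathbb{C}=V^{0,0}\to V^{2,2}$ (equivalently $\Omega\neq 0$).
   Context: $V^{p,q}$ is the space of constant coefficient $(p,q)$-forms on $\mathbb{C}^n$. A $(1,1)$-form is Kähler if it equals $\sum_l\frac{\sqrt{-1}}{2}dw_l\wedge d\overline{w_l}$ in some complex linear coordinates. A matrix $M=(\alpha_{i,j})$ of $(1,1)$-forms with $\alpha_{i,j}=\overline{\alpha_{j,i}}$ is Griffiths positive if $\sum_{i,j}\theta_i\alpha_{i,j}\overline{\theta_j}$ is Kähler for all nonzero $\theta$. $\det(M)=\alpha_{1,1}\wedge\alpha_{2,2}-\alpha_{1,2}\wedge\alpha_{2,1}$. *)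

theory Defs
  imports "HOL-Analysis.Analysis"
begin

text \<open>Constant coefficient forms on C^2 with coordinates z1, z2 (indices of type 2).
  A (1,0)-form  sum_i u_i dz_i  is its coefficient vector u :: complex^2;
  a (0,1)-form  sum_j v_j d(conj z_j)  likewise.
  A (1,1)-form  sum_{i,j} a_ij dz_i /\ d(conj z_j)  is its coefficient matrix a :: complex^2^2.
  V^{2,2} is one-dimensional, spanned by dz1 /\ d(conj z1) /\ dz2 /\ d(conj z2);
  a (2,2)-form is identified with its coefficient in this basis (a complex number).\<close>

type_synonym form10 = "complex^2"
type_synonym form01 = "complex^2"
type_synonym form11 = "complex^2^2"
type_synonym form22 = complex

definition smult11 :: "complex \<Rightarrow> form11 \<Rightarrow> form11" where
  "smult11 c a = (\<chi> i j. c * a $ i $ j)"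

definition wedge10_01 :: "form10 \<Rightarrow> form01 \<Rightarrow> form11" where
  "wedge10_01 u v = (\<chi> i j. u $ i * v $ j)"

definition conj10 :: "form10 \<Rightarrow> form01" where
  "conj10 u = (\<chi> j. cnj (u $ j))"

text \<open>complex conjugate of a (1,1)-form:
  conj(a_ij dz_i /\ d(conj z_j)) = conj(a_ij) d(conj z_i) /\ dz_j = - conj(a_ij) dz_j /\ d(conj z_i)\<close>
definition conj11 :: "form11 \<Rightarrow> form11" where
  "conj11 a = (\<chi> p q. - cnj (a $ q $ p))"

text \<open>wedge of two (1,1)-forms, expressed in the basis dz1 /\ d(conj z1) /\ dz2 /\ d(conj z2)
  (this is the literal expansion of the exterior product with the sign rules)\<close>
definition wedge11 :: "form11 \<Rightarrow> form11 \<Rightarrow> form22" where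
  "wedge11 a b =
     a$1$1 * b$2$2 + a$2$2 * b$1$1 - a$1$2 * b$2$1 - a$2$1 * b$1$2"

text \<open>Kaehler: equals sum_l (sqrt(-1)/2) dw_l /\ d(conj w_l) for complex linear coordinates
  w_l = sum_i W_li z_i, i.e. dw_l = row l of an invertible matrix W.\<close>
definition kahler :: "form11 \<Rightarrow> bool" where
  "kahler \<alpha> \<longleftrightarrow> (\<exists>W :: complex^2^2. invertible W \<and>
      \<alpha> = (\<Sum>l\<in>UNIV. smult11 (\<i> / 2) (wedge10_01 (W $ l) (conj10 (W $ l)))))"

definition griffiths_positive :: "form11^2^2 \<Rightarrow> bool" where
  "griffiths_positive M \<longleftrightarrow>
     (\<forall>i j. M $ i $ j = conj11 (M $ j $ i)) \<and>
     (\<forall>\<theta> :: complex^2. \<theta> \<noteq> 0 \<longrightarrow>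
        kahler (\<Sum>i\<in>UNIV. \<Sum>j\<in>UNIV. smult11 (\<theta> $ i * cnj (\<theta> $ j)) (M $ i $ j)))"

definition det_form :: "form11^2^2 \<Rightarrow> form22" where
  "det_form M = wedge11 (M$1$1) (M$2$2) - wedge11 (M$1$2) (M$2$1)"

end

theory Submission
  imports Defs
begin

text \<open>Write each entry of \<open>M\<close> as \<open>(\<i>/2) \<Sum>p q. h\<^sup>i\<^sup>j\<^sub>p\<^sub>q dz\<^sub>p \<and> d(conj z\<^sub>q)\<close>. Griffiths
  positivity says that \<open>\<Sum>i j. \<theta>\<^sub>i conj \<theta>\<^sub>j h\<^sup>i\<^sup>j(v, v) > 0\<close> for all nonzero \<open>\<theta>, v\<close>, and
  \<open>det M = -(1/4) (D(h\<^sup>1\<^sup>1, h\<^sup>2\<^sup>2) - D(h\<^sup>1\<^sup>2, h\<^sup>2\<^sup>1))\<close> with \<open>D\<close> the mixed discriminant \<open>wedge11\<close>.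
  A change of basis \<open>U\<close> in \<open>v\<close> multiplies this by \<open>|det U|\<^sup>2\<close>, so we may assume \<open>h\<^sup>1\<^sup>1\<close>
  diagonal. Then the bracket has real part \<open>p\<^sub>1 r\<^sub>2 + p\<^sub>2 r\<^sub>1 - 2 Re (b\<^sub>1 conj b\<^sub>2) + |c|\<^sup>2 + |d|\<^sup>2\<close>, where
  \<open>p\<^sub>k, r\<^sub>k, b\<^sub>k\<close> are the \<open>k\<close>-th diagonal entries of \<open>h\<^sup>1\<^sup>1, h\<^sup>2\<^sup>2, h\<^sup>1\<^sup>2\<close> and \<open>c, d\<close> the
  off-diagonal entries of \<open>h\<^sup>1\<^sup>2\<close>. Testing positivity
  with \<open>v = e\<^sub>k\<close>, \<open>\<theta> = (r\<^sub>k, -b\<^sub>k)\<close> gives \<open>|b\<^sub>k|\<^sup>2 < p\<^sub>k r\<^sub>k\<close>, and AM-GM makes the real part positive.\<close>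

lemma vector_2_eq_0_iff: "(vector [x, y] :: 'a::zero^2) = 0 \<longleftrightarrow> x = 0 \<and> y = 0"
  by (auto simp: vec_eq_iff forall_2)

lemma vector_matrix_mult_invertible_eq_0:
  fixes U :: "'a::field^'n^'n"
  assumes "invertible U" "v v* U = 0"
  shows "v = 0"
proof -
  obtain U' where "U ** U' = mat 1" using assms(1) invertible_right_inverse by blast
  then have "v = (v v* U) v* U'" by (simp add: vector_matrix_mul_assoc)
  with assms(2) show ?thesis by simp
qed

lemma sum_swap_pairs:
  "(\<Sum>a\<in>A. \<Sum>b\<in>B. \<Sum>c\<in>C. \<Sum>d\<in>D. f a b c d) = (\<Sum>c\<in>C. \<Sum>d\<in>D. \<Sum>a\<in>A. \<Sum>b\<in>B. f a b c d)"
proof -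
  have "(\<Sum>a\<in>A. \<Sum>b\<in>B. \<Sum>c\<in>C. \<Sum>d\<in>D. f a b c d) = (\<Sum>a\<in>A. \<Sum>c\<in>C. \<Sum>b\<in>B. \<Sum>d\<in>D. f a b c d)"
    by (rule sum.cong[OF refl], rule sum.swap)
  also have "\<dots> = (\<Sum>c\<in>C. \<Sum>a\<in>A. \<Sum>b\<in>B. \<Sum>d\<in>D. f a b c d)"
    by (rule sum.swap)
  also have "\<dots> = (\<Sum>c\<in>C. \<Sum>a\<in>A. \<Sum>d\<in>D. \<Sum>b\<in>B. f a b c d)"
    by (rule sum.cong[OF refl], rule sum.cong[OF refl], rule sum.swap)
  also have "\<dots> = (\<Sum>c\<in>C. \<Sum>d\<in>D. \<Sum>a\<in>A. \<Sum>b\<in>B. f a b c d)"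
    by (rule sum.cong[OF refl], rule sum.swap)
  finally show ?thesis .
qed

lemma bij_mult_right:
  fixes d :: "'a::field"
  assumes "d \<noteq> 0"
  shows "bij (\<lambda>c. c * d)"
  by (rule bij_betwI[of _ _ _ "\<lambda>c. c / d"]) (use assms in auto)

definition sesq :: "complex^'n^'n \<Rightarrow> complex^'n \<Rightarrow> complex^'n \<Rightarrow> complex" where
  "sesq X u w = (\<Sum>p\<in>UNIV. \<Sum>q\<in>UNIV. u$p * X$p$q * cnj (w$q))"

lemma sesq_axis [simp]: "sesq X (axis i 1) (axis j 1) = X$i$j"
proof -
  have "(if P then 1 else 0) * x = (if P then x else 0)"
    and "x * cnj (if P then 1 else 0) = (if P then x else 0)" for P and x :: complex
    by simp_all
  then show ?thesis
    by (simp add: sesq_def axis_def)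
qed

lemma sesq_sum: "sesq (\<Sum>i\<in>I. X i) u w = (\<Sum>i\<in>I. sesq (X i) u w)"
  unfolding sesq_def by (simp add: sum_distrib_left sum_distrib_right sum.swap[where B = I])

lemma sesq_adjoint:
  assumes "\<And>p q. Y$p$q = cnj (X$q$p)"
  shows "sesq Y u w = cnj (sesq X w u)"
  unfolding sesq_def by (subst sum.swap) (simp add: assms mult_ac)

text \<open>\<open>congruence U X\<close> is \<open>U X U\<^sup>*\<close>: the matrix of the form \<open>sesq X\<close> in the basis given by the rows of \<open>U\<close>.\<close>

definition congruence :: "complex^'n^'n \<Rightarrow> complex^'n^'n \<Rightarrow> complex^'n^'n" where
  "congruence U X = (\<chi> k l. sesq X (U$k) (U$l))"

lemma sesq_congruence: "sesq (congruence U X) v w = sesq X (v v* U) (w v* U)"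
proof -
  have "sesq (congruence U X) v w
      = (\<Sum>a\<in>UNIV. \<Sum>b\<in>UNIV. \<Sum>c\<in>UNIV. \<Sum>d\<in>UNIV. v$a * U$a$c * X$c$d * cnj (U$b$d) * cnj (w$b))"
    by (simp add: sesq_def congruence_def sum_distrib_left sum_distrib_right mult_ac)
  also have "\<dots> = (\<Sum>c\<in>UNIV. \<Sum>d\<in>UNIV. \<Sum>a\<in>UNIV. \<Sum>b\<in>UNIV. v$a * U$a$c * X$c$d * cnj (U$b$d) * cnj (w$b))"
    by (rule sum_swap_pairs)
  also have "\<dots> = sesq X (v v* U) (w v* U)"
    by (simp add: sesq_def vector_matrix_mult_def sum_product sum_distrib_left sum_distrib_right mult_ac)
  finally show ?thesis .
qed

lemma wedge11_congruence:
  "wedge11 (congruence U X) (congruence U Y) = of_real ((cmod (det U))\<^sup>2) * wedge11 X Y"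
  unfolding complex_norm_square
  by (simp add: wedge11_def congruence_def sesq_def det_2 sum_2 algebra_simps)

lemma det_form_congruence:
  "det_form (\<chi> i j. congruence U (A$i$j)) = of_real ((cmod (det U))\<^sup>2) * det_form A"
  by (simp add: det_form_def wedge11_congruence algebra_simps)

lemma exists_congruence_offdiag_zero:
  fixes X :: "complex^2^2"
  assumes "X$1$1 = of_real x" "x \<noteq> 0"
  shows "\<exists>U. invertible U \<and> congruence U X $1$2 = 0"
proof -
  define U :: "complex^2^2" where "U = vector [vector [1, 0], vector [- cnj (X$1$2), X$1$1]]"
  have "det U \<noteq> 0"
    using assms by (simp add: U_def det_2)
  moreover have "congruence U X $1$2 = 0"
    using assms by (simp add: U_def congruence_def sesq_def sum_2 algebra_simps)
  ultimately show ?thesis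
    using invertible_det_nz by blast
qed

text \<open>Writing a (1,1)-form as \<open>\<alpha> = (\<i>/2) \<Sum>p q. h\<^sub>p\<^sub>q dz\<^sub>p \<and> d(conj z\<^sub>q)\<close>, its Hermitian coefficient
  matrix is \<open>h = -2\<i> \<alpha>\<close>; for a Kaehler form \<open>h\<close> is positive definite.\<close>

definition hermitian_coeffs :: "form11 \<Rightarrow> complex^2^2" where
  "hermitian_coeffs \<alpha> = smult11 (- 2 * \<i>) \<alpha>"

lemma sesq_smult11: "sesq (smult11 c X) u w = c * sesq X u w"
  unfolding sesq_def smult11_def by (simp add: sum_distrib_left mult_ac)

lemma sesq_hermitian_coeffs_kahler_form:
  fixes W :: "complex^2^'l"
  shows "sesq (hermitian_coeffs (\<Sum>l\<in>UNIV. smult11 (\<i> / 2) (wedge10_01 (W $ l) (conj10 (W $ l))))) v v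
     = of_real ((norm (W *v v))\<^sup>2)"
proof -
  have "sesq (hermitian_coeffs (\<Sum>l\<in>UNIV. smult11 (\<i> / 2) (wedge10_01 (W $ l) (conj10 (W $ l))))) v v
      = (\<Sum>l\<in>UNIV. (W *v v) $ l * cnj ((W *v v) $ l))"
    by (simp add: sesq_def hermitian_coeffs_def smult11_def wedge10_01_def conj10_def
        matrix_vector_mult_def sum_2 sum_distrib_left algebra_simps flip: sum.distrib)
  also have "\<dots> = of_real (\<Sum>l\<in>UNIV. (cmod ((W *v v) $ l))\<^sup>2)"
    by (simp only: of_real_sum complex_norm_square)
  also have "\<dots> = of_real ((norm (W *v v))\<^sup>2)"
    by (simp add: norm_vec_def L2_set_def sum_nonneg)
  finally show ?thesis .
qed

lemma sesq_hermitian_coeffs_pos_if_kahler: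
  assumes "kahler \<alpha>" "v \<noteq> 0"
  shows "\<exists>t>0. sesq (hermitian_coeffs \<alpha>) v v = of_real t"
proof -
  obtain W :: "complex^2^2" where "invertible W"
    and \<alpha>: "\<alpha> = (\<Sum>l\<in>UNIV. smult11 (\<i> / 2) (wedge10_01 (W $ l) (conj10 (W $ l))))"
    using assms(1) unfolding kahler_def by blast
  then have "W *v v \<noteq> 0"
    using assms(2) invertible_left_inverse matrix_left_invertible_ker by blast
  then show ?thesis
    unfolding \<alpha> sesq_hermitian_coeffs_kahler_form by (intro exI[of _ "(norm (W *v v))\<^sup>2"]) simp
qed

definition hermitian_griffiths_positive :: "complex^'n^'n^'m^'m \<Rightarrow> bool" where
  "hermitian_griffiths_positive A \<longleftrightarrow>
     (\<forall>i j p q. A$i$j$p$q = cnj (A$j$i$q$p)) \<and>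
     (\<forall>\<theta> v. \<theta> \<noteq> 0 \<longrightarrow> v \<noteq> 0 \<longrightarrow>
        (\<exists>t>0. sesq (\<chi> i j. sesq (A$i$j) v v) \<theta> \<theta> = of_real t))"

lemma hermitian_griffiths_positive_adjoint:
  assumes "hermitian_griffiths_positive A"
  shows "sesq (A$j$i) u w = cnj (sesq (A$i$j) w u)"
  using assms sesq_adjoint unfolding hermitian_griffiths_positive_def by metis

lemma hermitian_griffiths_positive_diag:
  assumes "hermitian_griffiths_positive A" "v \<noteq> 0"
  shows "\<exists>t>0. sesq (A$i$i) v v = of_real t"
proof -
  have "axis i (1::complex) \<noteq> 0"
    by (simp add: axis_eq_0_iff)
  then obtain t where "t > 0" "sesq (\<chi> i j. sesq (A$i$j) v v) (axis i 1) (axis i 1) = of_real t"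
    using assms unfolding hermitian_griffiths_positive_def by blast
  then show ?thesis
    by auto
qed

lemma hermitian_griffiths_positive_offdiag_bound:
  fixes A :: "complex^'n^'n^2^2"
  assumes A: "hermitian_griffiths_positive A" and "v \<noteq> 0"
    and p: "sesq (A$1$1) v v = of_real p" and r: "sesq (A$2$2) v v = of_real r"
  shows "(cmod (sesq (A$1$2) v v))\<^sup>2 < p * r"
proof -
  define g where "g = sesq (A$1$2) v v"
  have "r > 0"
    using hermitian_griffiths_positive_diag[OF A \<open>v \<noteq> 0\<close>, of 2] r by auto
  define \<theta> where "\<theta> = (vector [of_real r, - g] :: complex^2)"
  have "\<theta> \<noteq> 0"
    using \<open>r > 0\<close> by (simp add: \<theta>_def vector_2_eq_0_iff)
  then obtain t where "t > 0"
    and t: "sesq (\<chi> i j. sesq (A$i$j) v v) \<theta> \<theta> = of_real t"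
    using A \<open>v \<noteq> 0\<close> unfolding hermitian_griffiths_positive_def by blast
  have "sesq (A$2$1) v v = cnj g"
    unfolding g_def by (rule hermitian_griffiths_positive_adjoint[OF A])
  then have "sesq (\<chi> i j. sesq (A$i$j) v v) \<theta> \<theta> = of_real (r * (p * r - (cmod g)\<^sup>2))"
    by (simp add: sesq_def[of "\<chi> i j. sesq (A$i$j) v v"] \<theta>_def sum_2 p r g_def[symmetric]
        algebra_simps flip: complex_norm_square)
  with t \<open>t > 0\<close> \<open>r > 0\<close> have "p * r - (cmod g)\<^sup>2 > 0"
    by (metis of_real_eq_iff zero_less_mult_pos)
  then show ?thesis
    unfolding g_def by simp
qed

lemma hermitian_griffiths_positive_congruence:
  fixes A :: "complex^'n^'n^'m^'m"
  assumes A: "hermitian_griffiths_positive A" and "invertible U"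
  shows "hermitian_griffiths_positive (\<chi> i j. congruence U (A$i$j))"
  unfolding hermitian_griffiths_positive_def
proof (intro conjI allI impI)
  fix i j p q
  show "(\<chi> i j. congruence U (A$i$j))$i$j$p$q = cnj ((\<chi> i j. congruence U (A$i$j))$j$i$q$p)"
    by (simp add: congruence_def hermitian_griffiths_positive_adjoint[OF A, of i j])
next
  fix \<theta> :: "complex^'m" and v :: "complex^'n"
  assume "\<theta> \<noteq> 0" "v \<noteq> 0"
  then have "v v* U \<noteq> 0"
    using \<open>invertible U\<close> vector_matrix_mult_invertible_eq_0 by blast
  with \<open>\<theta> \<noteq> 0\<close> show "\<exists>t>0. sesq (\<chi> i j. sesq ((\<chi> i j. congruence U (A$i$j))$i$j) v v) \<theta> \<theta>
      = of_real t"
    using A unfolding hermitian_griffiths_positive_def by (simp add: sesq_congruence)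
qed

lemma hermitian_griffiths_positive_hermitian_coeffs:
  assumes "griffiths_positive M"
  shows "hermitian_griffiths_positive (\<chi> i j. hermitian_coeffs (M$i$j))"
  unfolding hermitian_griffiths_positive_def
proof (intro conjI allI impI)
  fix i j p q
  have "M$i$j = conj11 (M$j$i)"
    using assms unfolding griffiths_positive_def by blast
  then show "(\<chi> i j. hermitian_coeffs (M$i$j))$i$j$p$q = cnj ((\<chi> i j. hermitian_coeffs (M$i$j))$j$i$q$p)"
    by (simp add: hermitian_coeffs_def smult11_def conj11_def)
next
  fix \<theta> v :: "complex^2"
  assume "\<theta> \<noteq> 0" "v \<noteq> 0"
  have "kahler (\<Sum>i\<in>UNIV. \<Sum>j\<in>UNIV. smult11 (\<theta> $ i * cnj (\<theta> $ j)) (M $ i $ j))"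
    using assms \<open>\<theta> \<noteq> 0\<close> unfolding griffiths_positive_def by blast
  moreover have "sesq (\<chi> i j. sesq ((\<chi> i j. hermitian_coeffs (M$i$j))$i$j) v v) \<theta> \<theta>
      = sesq (hermitian_coeffs (\<Sum>i\<in>UNIV. \<Sum>j\<in>UNIV. smult11 (\<theta> $ i * cnj (\<theta> $ j)) (M $ i $ j))) v v"
    unfolding sesq_def[of "\<chi> i j. sesq ((\<chi> i j. hermitian_coeffs (M$i$j))$i$j) v v"]
    by (simp add: hermitian_coeffs_def sesq_smult11 sesq_sum sum_distrib_left mult_ac)
  ultimately show "\<exists>t>0. sesq (\<chi> i j. sesq ((\<chi> i j. hermitian_coeffs (M$i$j))$i$j) v v) \<theta> \<theta>
      = of_real t"
    using sesq_hermitian_coeffs_pos_if_kahler \<open>v \<noteq> 0\<close> by simp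
qed

lemma det_form_hermitian_coeffs:
  "det_form (\<chi> i j. hermitian_coeffs (M$i$j)) = - 4 * det_form M"
  by (simp add: det_form_def wedge11_def hermitian_coeffs_def smult11_def algebra_simps)

lemma two_Re_mult_cnj_less:
  fixes b1 b2 :: complex and p1 p2 r1 r2 :: real
  assumes "0 < p1" "0 < p2" "0 < r1" "0 < r2"
    and "(cmod b1)\<^sup>2 < p1 * r1" "(cmod b2)\<^sup>2 < p2 * r2"
  shows "2 * Re (b1 * cnj b2) < p1 * r2 + p2 * r1"
proof -
  have "(cmod b1 * cmod b2)\<^sup>2 < (p1 * r1) * (p2 * r2)"
    unfolding power_mult_distrib by (rule mult_strict_mono') (use assms in auto)
  also have "\<dots> \<le> ((p1 * r2 + p2 * r1) / 2)\<^sup>2"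
    using sum_squares_ge_zero[of "(p1 * r2 - p2 * r1) / 2" 0]
    by (simp add: power2_eq_square field_simps)
  finally have "cmod b1 * cmod b2 < (p1 * r2 + p2 * r1) / 2"
    by (rule power2_less_imp_less) (use assms in auto)
  moreover have "Re (b1 * cnj b2) \<le> cmod b1 * cmod b2"
    using complex_Re_le_cmod[of "b1 * cnj b2"] by (simp add: norm_mult)
  ultimately show ?thesis
    by argo
qed

lemma det_form_Re_pos_offdiag_zero:
  fixes A :: "form11^2^2"
  assumes A: "hermitian_griffiths_positive A" and "A$1$1$1$2 = 0"
  shows "0 < Re (det_form A)"
proof -
  have e: "axis k (1::complex) \<noteq> 0" for k :: 2
    by (simp add: axis_eq_0_iff)
  have "\<exists>t>0. A$i$i$k$k = of_real t" for i k :: 2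
    using hermitian_griffiths_positive_diag[OF A e[of k], of i] by simp
  then obtain p1 p2 r1 r2 where "0 < p1" "0 < p2" "0 < r1" "0 < r2"
    and p1: "A$1$1$1$1 = of_real p1" and p2: "A$1$1$2$2 = of_real p2"
    and r1: "A$2$2$1$1 = of_real r1" and r2: "A$2$2$2$2 = of_real r2"
    by meson
  have "(cmod (A$1$2$k$k))\<^sup>2 < p * r"
    if "A$1$1$k$k = of_real p" "A$2$2$k$k = of_real r" for k p r
    using hermitian_griffiths_positive_offdiag_bound[OF A e, of k p r] that by simp
  then have bound: "2 * Re (A$1$2$1$1 * cnj (A$1$2$2$2)) < p1 * r2 + p2 * r1"
    using two_Re_mult_cnj_less \<open>0 < p1\<close> \<open>0 < p2\<close> \<open>0 < r1\<close> \<open>0 < r2\<close> p1 p2 r1 r2 by blast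
  have "A$2$1$p$q = cnj (A$1$2$q$p)" "A$1$1$2$1 = cnj (A$1$1$1$2)" for p q
    using A unfolding hermitian_griffiths_positive_def by blast+
  then have "det_form A = of_real (p1 * r2 + p2 * r1)
      - (A$1$2$1$1 * cnj (A$1$2$2$2) + cnj (A$1$2$1$1 * cnj (A$1$2$2$2)))
      + of_real ((cmod (A$1$2$1$2))\<^sup>2 + (cmod (A$1$2$2$1))\<^sup>2)"
    unfolding of_real_add complex_norm_square using \<open>A$1$1$1$2 = 0\<close> p1 p2 r1 r2
    by (simp add: det_form_def wedge11_def algebra_simps)
  then have "Re (det_form A) = p1 * r2 + p2 * r1 - 2 * Re (A$1$2$1$1 * cnj (A$1$2$2$2))
      + ((cmod (A$1$2$1$2))\<^sup>2 + (cmod (A$1$2$2$1))\<^sup>2)"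
    by simp
  then show ?thesis
    using bound zero_le_power2[of "cmod (A$1$2$1$2)"] zero_le_power2[of "cmod (A$1$2$2$1)"] by linarith
qed

lemma det_form_Re_pos:
  fixes A :: "form11^2^2"
  assumes A: "hermitian_griffiths_positive A"
  shows "0 < Re (det_form A)"
proof -
  obtain p where "0 < p" "A$1$1$1$1 = of_real p"
    using hermitian_griffiths_positive_diag[OF A, of "axis 1 1" 1] by (auto simp: axis_eq_0_iff)
  then obtain U where U: "invertible U" "congruence U (A$1$1) $1$2 = 0"
    using exists_congruence_offdiag_zero[of "A$1$1" p] by auto
  have "0 < Re (det_form (\<chi> i j. congruence U (A$i$j)))"
    using det_form_Re_pos_offdiag_zero hermitian_griffiths_positive_congruence[OF A U(1)] U(2) by simp
  moreover have "0 < cmod (det U)"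
    using U(1) by (simp add: invertible_det_nz)
  ultimately show ?thesis
    by (simp add: det_form_congruence zero_less_mult_iff)
qed

theorem mainTheorem5:
  fixes M :: "form11^2^2"
  assumes "griffiths_positive M"
  shows "bij (\<lambda>c::complex. c * det_form M)"
proof (rule bij_mult_right)
  have "0 < Re (det_form (\<chi> i j. hermitian_coeffs (M$i$j)))"
    using assms det_form_Re_pos hermitian_griffiths_positive_hermitian_coeffs by blast
  then show "det_form M \<noteq> 0"
    by (auto simp: det_form_hermitian_coeffs)
qed

end
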